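(* Let $a,b,c\in\mathbb{Z}$, let $A=\begin{pmatrix}0&a&-c\\-a&0&b\\c&-b&0\end{pmatrix}$, and consider the graded cluster algebra $\mathcal{A}\big((x_1,x_2,x_3),A,(b,c,a)\big)$. Let $[p_n,\dots,p_1]$ ($n\ge1$) be a mutation path without repetitions and let $z=\operatorname{var}_A[p_n,\dots,p_1]$. Writing $P=A_{[p_n,\dots,p_1]}$, we have $\deg(z)=(-1)^{n+1}P_{32}$ if $p_n=1$, $\deg(z)=(-1)^{n}P_{31}$ if $p_n=2$, and $\deg(z)=(-1)^{n+1}P_{21}$ if $p_n=3$.
   Context: Matrix mutation: for a $3\times3$ skew-symmetric integer matrix $B=(b_{ij})$, $\mu_k(B)=(b'_{ij})$ with $b'_{ij}=-b_{ij}$ if $i=k$ or $j=k$, $b'_{ij}=b_{ij}+\operatorname{sgn}(b_{ik})\max(b_{ik}b_{kj},0)$ otherwise. A seed $((x_1,x_2,x_3),B)$ mutates in direction $k$ to $(x',\mu_k B)$ with $x'_j=x_j$ ($j\ne k$) and $x'_k=\big(\prod_{b_{ik}>0}x_i^{b_{ik}}+\prod_{b_{ik}<0}x_i^{-b_{ik}}\big)/x_k$. Grading: $\deg x_i=g_i$ with $Bg=0$; under mutation at $k$ the degree vector becomes $g'$ with $g'_j=g_j$ ($j\neq k$), $g'_k=-g_k+\sum_{b_{ik}>0}b_{ik}g_i$, and cluster variables are homogeneous of these degrees. A mutation path $[p_n,\dots,p_1]$ means mutate first at $p_1$, then $p_2$, ..., finally $p_n$; it is without repetitions if $p_{i+1}\ne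 p_i$ for all $i$. $A_{[p_n,\dots,p_1]}=\mu_{p_n}\cdots\mu_{p_1}(A)$, and $\operatorname{var}_A[p_n,\dots,p_1]$ is the cluster variable newly created by the final mutation $\mu_{p_n}$ along this path starting from the initial seed. *)

theory Defs
  imports Main
begin

text \<open>3x3 integer matrices are represented as functions nat => nat => int,
  with meaningful indices 1,2,3. Degree vectors as nat => int, indices 1,2,3.\<close>

type_synonym mat3 = "nat \<Rightarrow> nat \<Rightarrow> int"
type_synonym vec3 = "nat \<Rightarrow> int"

definition mat_mutate :: "nat \<Rightarrow> mat3 \<Rightarrow> mat3" where
  "mat_mutate k B = (\<lambda>i j. if i = k \<or> j = k then - B i j
      else B i j + sgn (B i k) * max (B i k * B k j) 0)"

definition deg_mutate :: "nat \<Rightarrow> mat3 \<Rightarrow> vec3 \<Rightarrow> vec3" where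
  "deg_mutate k B g = g(k := - g k + (\<Sum>i\<in>{1,2,3}. if B i k > 0 then B i k * g i else 0))"

text \<open>A mutation path [p_n, ..., p_1] (list head = p_n, mutated last) applied to
  a pair (exchange matrix, degree vector).\<close>
definition mutate_path :: "nat list \<Rightarrow> mat3 \<times> vec3 \<Rightarrow> mat3 \<times> vec3" where
  "mutate_path ps s = foldr (\<lambda>k (B, g). (mat_mutate k B, deg_mutate k B g)) ps s"

definition Amat :: "int \<Rightarrow> int \<Rightarrow> int \<Rightarrow> mat3" where
  "Amat a b c = (\<lambda>i j.
     if i = 1 \<and> j = 2 then a else if i = 1 \<and> j = 3 then - c
     else if i = 2 \<and> j = 1 then - a else if i = 2 \<and> j = 3 then b
     else if i = 3 \<and> j = 1 then c else if i = 3 \<and> j = 2 then - b else 0)"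

definition gvec :: "int \<Rightarrow> int \<Rightarrow> int \<Rightarrow> vec3" where
  "gvec a b c = (\<lambda>i. if i = 1 then b else if i = 2 then c else if i = 3 then a else 0)"

text \<open>Degree of var_A[p_n,...,p_1]: the p_n-th entry of the degree vector after the path.\<close>
definition var_deg :: "int \<Rightarrow> int \<Rightarrow> int \<Rightarrow> nat list \<Rightarrow> int" where
  "var_deg a b c ps = snd (mutate_path ps (Amat a b c, gvec a b c)) (hd ps)"

definition path_mat :: "int \<Rightarrow> int \<Rightarrow> int \<Rightarrow> nat list \<Rightarrow> mat3" where
  "path_mat a b c ps = fst (mutate_path ps (Amat a b c, gvec a b c))"

end

theory Submission
  imports Defs
begin

text \<open>The matrices \<open>Amat a b c\<close> form a family closed under mutation, and \<open>gvec a b c\<close>, i.e.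
  \<open>(b, c, a) = (A\<^sub>2\<^sub>3, A\<^sub>3\<^sub>1, A\<^sub>1\<^sub>2)\<close>, spans the kernel of \<open>Amat a b c\<close>. A direct computation
  shows that mutation sends this kernel vector to minus the kernel vector of the mutated
  matrix. Hence after \<open>n\<close> mutations the degree vector is \<open>(-1)\<^sup>n (P\<^sub>2\<^sub>3, P\<^sub>3\<^sub>1, P\<^sub>1\<^sub>2)\<close>, and
  the degree of the new variable is the entry selected by the last direction; skew-symmetry
  of \<open>P\<close> accounts for the transposed entries and extra signs in the statement.\<close>

lemma mat_mutate_Amat:
  assumes "k \<in> {1,2,3}"
  shows "mat_mutate k (Amat a b c) =
    Amat (mat_mutate k (Amat a b c) 1 2) (mat_mutate k (Amat a b c) 2 3)
      (mat_mutate k (Amat a b c) 3 1)"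
proof -
  from assms have "k = 1 \<or> k = 2 \<or> k = 3" by simp
  then show ?thesis
    by (elim disjE)
      (simp_all add: fun_eq_iff mat_mutate_def Amat_def sgn_if max_def mult.commute mult_le_0_iff)
qed

lemma deg_mutate_gvec:
  assumes "k \<in> {1,2,3}"
  shows "deg_mutate k (Amat a b c) (gvec a b c) =
    (\<lambda>i. - gvec (mat_mutate k (Amat a b c) 1 2) (mat_mutate k (Amat a b c) 2 3)
                 (mat_mutate k (Amat a b c) 3 1) i)"
proof -
  from assms have "k = 1 \<or> k = 2 \<or> k = 3" by simp
  then show ?thesis
    by (elim disjE; simp add: fun_eq_iff deg_mutate_def mat_mutate_def Amat_def gvec_def algebra_simps;
        auto simp: max_def mult_le_0_iff zero_le_mult_iff sgn_if algebra_simps)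
qed

lemma deg_mutate_scale:
  "deg_mutate k B (\<lambda>i. s * g i) = (\<lambda>i. s * deg_mutate k B g i)"
  by (simp add: fun_eq_iff deg_mutate_def sum_distrib_left algebra_simps if_distrib cong: if_cong)

lemma mutate_path_Amat:
  assumes "set ps \<subseteq> {1,2,3}"
  shows "\<exists>a' b' c'. mutate_path ps (Amat a b c, gvec a b c) =
           (Amat a' b' c', (\<lambda>i. (-1) ^ length ps * gvec a' b' c' i))"
  using assms
proof (induction ps)
  case Nil
  then show ?case by (auto simp: mutate_path_def)
next
  case (Cons k ps)
  then obtain a' b' c' where path: "mutate_path ps (Amat a b c, gvec a b c) =
      (Amat a' b' c', (\<lambda>i. (-1) ^ length ps * gvec a' b' c' i))"
    and k: "k \<in> {1,2,3}" by auto
  define M where "M = mat_mutate k (Amat a' b' c')"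
  have "mutate_path (k # ps) (Amat a b c, gvec a b c) =
      (M, deg_mutate k (Amat a' b' c') (\<lambda>i. (-1) ^ length ps * gvec a' b' c' i))"
    using path by (simp add: mutate_path_def M_def)
  also have "\<dots> = (Amat (M 1 2) (M 2 3) (M 3 1),
                   (\<lambda>i. (-1) ^ length (k # ps) * gvec (M 1 2) (M 2 3) (M 3 1) i))"
    using mat_mutate_Amat[OF k] deg_mutate_gvec[OF k] by (simp add: M_def deg_mutate_scale)
  finally show ?case by blast
qed

theorem mainTheorem10:
  fixes a b c :: int and ps :: "nat list"
  assumes "ps \<noteq> []" and "set ps \<subseteq> {1,2,3}" and "successively (\<noteq>) ps"
  shows "(hd ps = 1 \<longrightarrow> var_deg a b c ps = (-1) ^ (length ps + 1) * path_mat a b c ps 3 2)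
       \<and> (hd ps = 2 \<longrightarrow> var_deg a b c ps = (-1) ^ (length ps) * path_mat a b c ps 3 1)
       \<and> (hd ps = 3 \<longrightarrow> var_deg a b c ps = (-1) ^ (length ps + 1) * path_mat a b c ps 2 1)"
proof -
  obtain a' b' c' where path: "mutate_path ps (Amat a b c, gvec a b c) =
      (Amat a' b' c', (\<lambda>i. (-1) ^ length ps * gvec a' b' c' i))"
    using mutate_path_Amat[OF assms(2)] by blast
  show ?thesis
    unfolding var_deg_def path_mat_def path by (simp add: Amat_def gvec_def)
qed

end
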